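(* Let $d\ge2$, let $\mathbf A,\mathbf B\in\overline{\mathbb Q}[t]$ be nonzero coprime polynomials, $\mathbf c=\mathbf A/\mathbf B$, and let $\lambda\in\overline{\mathbb Q}^*$. Then for all but finitely many $v\in\Omega_{\mathbb Q}$ we have $\log\max\{|\mathbf A_{\mathbf c,n}(\lambda)|_v,|\mathbf B_{\mathbf c,n}(\lambda)|_v\}=0$ for all $n\in\mathbb N$.
   Context: $\Omega_{\mathbb Q}$ is the set of places of $\mathbb Q$ (archimedean and $p$-adic, normalized so the product formula holds), and for each $v$ a fixed extension of $|\cdot|_v$ to $\overline{\mathbb Q}$ is used. The polynomials $\mathbf A_{\mathbf c,n},\mathbf B_{\mathbf c,n}\in\overline{\mathbb Q}[t]$ are defined by: $\mathbf A_{\mathbf c,0}=\mathbf A$, $\mathbf B_{\mathbf c,0}=\mathbf B$; if $\mathbf A(0)\neq 0$ then $\mathbf A_{\mathbf c,1}=\mathbf A^d+t\mathbf B^d$, $\mathbf B_{\mathbf c,1}=\mathbf A\mathbf B^{d-1}$, while if $\mathbf A(0)=0$ then $\mathbf A_{\mathbf c,1}=(\mathbf A^d+t\mathbf B^d)/t$, $\mathbf B_{\mathbf c,1}=\mathbf A\mathbf B^{d-1}/t$; and for $n\ge1$, $\mathbf A_{\mathbf c,n+1}=\mathbf A_{\mathbf c,n}^d+t\,\mathbf B_{\mathbf c,n}^d$, $\mathbf B_{\mathbf c,n+1}=\mathbf A_{\mathbf c,n}\mathbf B_{\mathbf c,n}^{d-1}$. (These give $\mathbf f_\lambda^n(\mathbf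 c(\lambda))=[\mathbf A_{\mathbf c,n}(\lambda):\mathbf B_{\mathbf c,n}(\lambda)]$ for $\mathbf f_\lambda(z)=(z^d+\lambda)/z$.) *)

theory Defs
  imports Complex_Main "HOL-Computational_Algebra.Computational_Algebra"
begin

datatype place = Arch | Fin nat

definition places :: "place set" where
  "places = {Arch} \<union> {Fin p | p. prime p}"

definition padic_abs :: "nat \<Rightarrow> rat \<Rightarrow> real" where
  "padic_abs p q = (if q = 0 then 0 else
     (let (a, b) = quotient_of q in
      real p powr (- (real (multiplicity (int p) a) - real (multiplicity (int p) b)))))"

definition place_abs_rat :: "place \<Rightarrow> rat \<Rightarrow> real" where
  "place_abs_rat v q = (case v of Arch \<Rightarrow> \<bar>real_of_rat q\<bar> | Fin p \<Rightarrow> padic_abs p q)"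

text \<open>Qbar is modelled as the algebraic complex numbers. An absolute value on Qbar.\<close>
definition abs_value_on_Qbar :: "(complex \<Rightarrow> real) \<Rightarrow> bool" where
  "abs_value_on_Qbar f \<longleftrightarrow>
     (\<forall>x. algebraic x \<longrightarrow> f x \<ge> 0 \<and> (f x = 0 \<longleftrightarrow> x = 0)) \<and>
     (\<forall>x y. algebraic x \<longrightarrow> algebraic y \<longrightarrow> f (x * y) = f x * f y) \<and>
     (\<forall>x y. algebraic x \<longrightarrow> algebraic y \<longrightarrow> f (x + y) \<le> f x + f y)"

definition extends_places :: "(place \<Rightarrow> complex \<Rightarrow> real) \<Rightarrow> bool" where
  "extends_places absv \<longleftrightarrow>
     (\<forall>v\<in>places. abs_value_on_Qbar (absv v) \<and>
        (\<forall>q. absv v (of_rat q) = place_abs_rat v q))"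

definition Qbar_poly :: "complex poly \<Rightarrow> bool" where
  "Qbar_poly P \<longleftrightarrow> (\<forall>i. algebraic (coeff P i))"

definition step_AB :: "nat \<Rightarrow> complex poly \<times> complex poly \<Rightarrow> complex poly \<times> complex poly" where
  "step_AB d ab = (fst ab ^ d + [:0, 1:] * snd ab ^ d, fst ab * snd ab ^ (d - 1))"

fun AB_seq :: "nat \<Rightarrow> complex poly \<Rightarrow> complex poly \<Rightarrow> nat \<Rightarrow> complex poly \<times> complex poly" where
  "AB_seq d A B 0 = (A, B)"
| "AB_seq d A B (Suc 0) =
     (if poly A 0 \<noteq> 0 then step_AB d (A, B)
      else ((A ^ d + [:0, 1:] * B ^ d) div [:0, 1:], (A * B ^ (d - 1)) div [:0, 1:]))"
| "AB_seq d A B (Suc (Suc n)) = step_AB d (AB_seq d A B (Suc n))"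

definition A_seq :: "nat \<Rightarrow> complex poly \<Rightarrow> complex poly \<Rightarrow> nat \<Rightarrow> complex poly" where
  "A_seq d A B n = fst (AB_seq d A B n)"

definition B_seq :: "nat \<Rightarrow> complex poly \<Rightarrow> complex poly \<Rightarrow> nat \<Rightarrow> complex poly" where
  "B_seq d A B n = snd (AB_seq d A B n)"

end

theory Submission
  imports Defs "HOL-Algebra.Algebraic_Closure_Type" "HOL-Real_Asymp.Real_Asymp"
begin

text \<open>
  Away from finitely many places v the absolute value |.|_v is non-archimedean, \<lambda> is a
  v-unit and each of A(\<lambda>), B(\<lambda>) is either 0 or a v-unit; as A and B are coprime they
  do not both vanish at \<lambda>, so max(|A(\<lambda>)|_v, |B(\<lambda>)|_v) = 1. This normalisation
  propagates along the orbit: if max(|a|, |b|) = 1 and |\<lambda>| = 1, then either |a| = |b| = 1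
  and a b^(d-1) is a unit, or exactly one of a^d and \<lambda> b^d is a unit and the other is
  strictly smaller, so that a^d + \<lambda> b^d is a unit by the ultrametric inequality. The
  division by t in the first step only multiplies both entries by the unit 1/\<lambda>.
\<close>

section \<open>Algebraic numbers form a field\<close>

text \<open>Closure of the algebraic numbers under + and * is transferred from the subfield of
  algebraic elements of a field extension in HOL-Algebra, applied to \<complex> over \<rat>.\<close>

abbreviation complex_ring :: "complex ring" where
  "complex_ring \<equiv> ring_of_type_algebra"

lemma complex_ring_simps [simp]:
  "carrier complex_ring = UNIV" "mult complex_ring = (*)" "add complex_ring = (+)"
  "one complex_ring = 1" "zero complex_ring = 0"
  by (simp_all add: ring_of_type_algebra_def)

lemma complex_ring_pow [simp]: "x [^]\<^bsub>complex_ring\<^esub> (n :: nat) = x ^ n"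
  by (induction n) (simp_all add: ring_of_type_algebra_def mult.commute)

lemma complex_ring_a_inv [simp]: "a_inv complex_ring x = - x"
  using abelian_group.minus_equality[OF ring.is_abelian_group[OF ring_from_type_algebra], of "-x" x]
  by simp

lemma complex_ring_m_inv: "x \<noteq> 0 \<Longrightarrow> m_inv complex_ring x = inverse x"
  using comm_monoid.comm_inv_char[OF cring.axioms(2)[OF cring_from_type_algebra], of x "inverse x"]
  by simp

lemma complex_ring_eval: "ring.eval complex_ring xs x = poly (Poly (rev xs)) x"
  by (induction xs)
    (simp_all add: ring.eval.simps[OF ring_from_type_algebra] Poly_append poly_monom algebra_simps)

lemma subfield_Rats_complex_ring: "subfield (\<rat> :: complex set) complex_ring"
proof (rule field.subfieldI'[OF field_from_type_algebra])
  show "subring (\<rat> :: complex set) complex_ring"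
    by (rule ring.subringI[OF ring_from_type_algebra]) auto
  show "m_inv complex_ring k \<in> \<rat>" if "k \<in> \<rat> - {zero complex_ring}" for k :: complex
    using that by (auto simp: complex_ring_m_inv)
qed

lemma algebraic_imp_ring_algebraic:
  assumes "algebraic (x :: complex)"
  shows "ring.algebraic complex_ring \<rat> x"
proof -
  obtain q where q: "\<forall>i. Polynomial.coeff q i \<in> \<rat>" "q \<noteq> 0" "poly q x = 0"
    using assms unfolding algebraic_altdef by blast
  have "rev (coeffs q) \<in> carrier (\<rat>[X]\<^bsub>complex_ring\<^esub>)"
    unfolding univ_poly_def polynomial_def using q
    by (auto simp: hd_rev last_coeffs_eq_coeff_degree coeffs_def)
  moreover have "rev (coeffs q) \<noteq> []" using q by simp
  moreover have "ring.eval complex_ring (rev (coeffs q)) x = zero complex_ring"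
    using q by (simp add: complex_ring_eval)
  ultimately show ?thesis
    using ring.algebraicI[OF ring_from_type_algebra] unfolding over_def by blast
qed

lemma ring_algebraic_imp_algebraic:
  assumes "ring.algebraic complex_ring \<rat> (x :: complex)"
  shows "algebraic x"
proof -
  have domain: "domain complex_ring" using field_from_type_algebra field.axioms(1) by blast
  obtain p where p: "p \<in> carrier (\<rat>[X]\<^bsub>complex_ring\<^esub>)" "p \<noteq> []"
      "ring.eval complex_ring p x = 0"
    using domain.algebraicE[OF domain subfieldE(1)[OF subfield_Rats_complex_ring], of x] assms
    by (auto simp: over_def)
  have set_p: "set p \<subseteq> \<rat>" and hd_p: "hd p \<noteq> 0"
    using p(1,2) unfolding univ_poly_def polynomial_def by auto
  have "Polynomial.coeff (Poly (rev p)) (length p - 1) = hd p"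
    using p(2) by (simp add: nth_default_def rev_nth hd_conv_nth)
  then have "Poly (rev p) \<noteq> 0" using hd_p by (metis coeff_0)
  moreover have "\<forall>i. Polynomial.coeff (Poly (rev p)) i \<in> \<rat>"
    using set_p by (auto simp: nth_default_def) (metis length_rev nth_mem set_rev subsetD)
  moreover have "poly (Poly (rev p)) x = 0" using p(3) by (simp add: complex_ring_eval)
  ultimately show ?thesis unfolding algebraic_altdef by blast
qed

lemma
  assumes "algebraic (x :: complex)" and "algebraic y"
  shows algebraic_add: "algebraic (x + y)"
    and algebraic_mult: "algebraic (x * y)"
proof -
  let ?K = "{z \<in> carrier complex_ring. ring.algebraic complex_ring \<rat> z}"
  have "subring ?K complex_ring"
    using subfieldE(1)[OF field.subfield_of_algebraics[OF field_from_type_algebra subfield_Rats_complex_ring]]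
    by (simp add: over_def)
  moreover have "x \<in> ?K" "y \<in> ?K" using assms algebraic_imp_ring_algebraic by auto
  ultimately show "algebraic (x + y)" "algebraic (x * y)"
    using subringE(6,7) ring_algebraic_imp_algebraic by force+
qed

lemma algebraic_power: "algebraic (x :: complex) \<Longrightarrow> algebraic (x ^ n)"
  by (induction n) (auto intro: algebraic_mult)

lemma algebraic_sum: "(\<And>i. i \<in> S \<Longrightarrow> algebraic (g i :: complex)) \<Longrightarrow> algebraic (sum g S)"
  by (induction S rule: infinite_finite_induct) (auto intro: algebraic_add)

lemma algebraic_poly: "Qbar_poly P \<Longrightarrow> algebraic x \<Longrightarrow> algebraic (poly P x)"
proof (induction P rule: pCons_induct)
  case (pCons a p)
  then have "algebraic a" "Qbar_poly p"
    unfolding Qbar_poly_def by (metis coeff_pCons_0, metis coeff_pCons_Suc)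
  with pCons show ?case by (auto intro!: algebraic_add algebraic_mult)
qed simp

lemmas algebraic_intros = algebraic_add algebraic_mult algebraic_power

section \<open>Absolute values on the algebraic numbers\<close>

locale algebraic_abs_value =
  fixes f :: "complex \<Rightarrow> real"
  assumes abs_value: "abs_value_on_Qbar f"
begin

lemma nonneg: "algebraic x \<Longrightarrow> f x \<ge> 0"
  and eq_0_iff: "algebraic x \<Longrightarrow> f x = 0 \<longleftrightarrow> x = 0"
  and mult: "algebraic x \<Longrightarrow> algebraic y \<Longrightarrow> f (x * y) = f x * f y"
  and triangle: "algebraic x \<Longrightarrow> algebraic y \<Longrightarrow> f (x + y) \<le> f x + f y"
  using abs_value unfolding abs_value_on_Qbar_def by blast+

lemma zero [simp]: "f 0 = 0"
  using eq_0_iff[of 0] by simp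

lemma one [simp]: "f 1 = 1"
  using mult[of 1 1] eq_0_iff[of 1] by simp

lemma power: "algebraic x \<Longrightarrow> f (x ^ n) = f x ^ n"
  by (induction n) (simp_all add: mult algebraic_power)

lemma minus: "algebraic x \<Longrightarrow> f (- x) = f x"
proof -
  have "f (-1) ^ 2 = 1" and "f (-1) \<ge> 0"
    using mult[of "-1" "-1"] nonneg[of "-1"] by (simp_all add: power2_eq_square)
  then have "f (-1) = 1" using power2_eq_1_iff by force
  then show "algebraic x \<Longrightarrow> f (- x) = f x" using mult[of "-1" x] by simp
qed

lemma inverse_mult: "algebraic x \<Longrightarrow> x \<noteq> 0 \<Longrightarrow> f (inverse x) * f x = 1"
  using mult[of "inverse x" x] by auto

lemma sum_le: "(\<And>i. i \<in> S \<Longrightarrow> algebraic (g i)) \<Longrightarrow> f (sum g S) \<le> (\<Sum>i\<in>S. f (g i))"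
proof (induction S rule: infinite_finite_induct)
  case (insert x F)
  then show ?case using triangle[of "g x" "sum g F"] algebraic_sum[of F g] by auto
qed auto

end

lemma le_1_if_powers_le_linear:
  fixes r :: real
  assumes powers: "\<And>N. r ^ N \<le> real N + 1" and "r \<ge> 0"
  shows "r \<le> 1"
proof (rule tendsto_lowerbound)
  show "((\<lambda>N. (real N + 1) powr (1 / real N)) \<longlongrightarrow> 1) sequentially" by real_asymp
  show "\<forall>\<^sub>F N in sequentially. r \<le> (real N + 1) powr (1 / real N)"
  proof (rule eventually_sequentiallyI)
    fix N :: nat assume "N \<ge> 1"
    have "r = (r ^ N) powr (1 / real N)"
      using \<open>r \<ge> 0\<close> \<open>N \<ge> 1\<close> by (cases "r = 0") (simp_all add: powr_realpow [symmetric] powr_powr)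
    also have "\<dots> \<le> (real N + 1) powr (1 / real N)"
      using powers \<open>r \<ge> 0\<close> by (intro powr_mono2) simp_all
    finally show "r \<le> (real N + 1) powr (1 / real N)" .
  qed
qed simp

text \<open>Boundedness on the integers implies the ultrametric inequality, by Artin's trick
  of expanding (x + y)^N.\<close>

locale nonarch_abs_value = algebraic_abs_value +
  assumes of_int_le_1: "\<And>n :: int. f (of_int n) \<le> 1"
begin

lemma power_add_le:
  assumes x: "algebraic x" and y: "algebraic y"
  shows "f (x + y) ^ N \<le> (real N + 1) * max (f x) (f y) ^ N"
proof -
  let ?M = "max (f x) (f y)"
  have "f (x + y) ^ N = f ((x + y) ^ N)" using power[of "x + y" N] x y algebraic_add by simp
  also have "(x + y) ^ N = (\<Sum>k\<le>N. of_nat (N choose k) * x ^ k * y ^ (N - k))"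
    by (rule binomial_ring)
  also have "f \<dots> \<le> (\<Sum>k\<le>N. f (of_nat (N choose k) * x ^ k * y ^ (N - k)))"
    by (rule sum_le) (auto intro!: algebraic_intros x y)
  also have "\<dots> \<le> (\<Sum>k\<le>N. ?M ^ N)"
  proof (rule sum_mono)
    fix k assume k: "k \<in> {..N}"
    have "f (of_nat (N choose k) * x ^ k * y ^ (N - k)) = f (of_nat (N choose k)) * f x ^ k * f y ^ (N - k)"
      using x y by (simp add: mult power algebraic_intros)
    also have "\<dots> \<le> 1 * ?M ^ k * ?M ^ (N - k)"
      using of_int_le_1[of "int (N choose k)"] nonneg[OF x] nonneg[OF y] nonneg[of "of_nat (N choose k)"]
      by (intro mult_mono power_mono) auto
    also have "\<dots> = ?M ^ N" using k by (simp add: power_add [symmetric])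
    finally show "f (of_nat (N choose k) * x ^ k * y ^ (N - k)) \<le> ?M ^ N" .
  qed
  finally show ?thesis by (simp add: add.commute)
qed

lemma ultrametric:
  assumes x: "algebraic x" and y: "algebraic y"
  shows "f (x + y) \<le> max (f x) (f y)"
proof (cases "max (f x) (f y) = 0")
  case True
  then show ?thesis using eq_0_iff nonneg x y by (simp add: max_def split: if_splits)
next
  case False
  then have M: "max (f x) (f y) > 0" using nonneg[OF x] by linarith
  have "f (x + y) / max (f x) (f y) \<le> 1"
  proof (rule le_1_if_powers_le_linear)
    show "(f (x + y) / max (f x) (f y)) ^ N \<le> real N + 1" for N
      using power_add_le[OF x y, of N] M by (simp add: power_divide divide_le_eq)
    show "f (x + y) / max (f x) (f y) \<ge> 0"
      using nonneg[of "x + y"] x y algebraic_add M by simp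
  qed
  then show ?thesis using M by (simp add: divide_le_eq)
qed

lemma add_eq_if_less:
  assumes x: "algebraic x" and y: "algebraic y" and less: "f y < f x"
  shows "f (x + y) = f x"
proof -
  have "f x \<le> max (f (x + y)) (f (- y))"
    using ultrametric[of "x + y" "- y"] x y algebraic_add by simp
  then show ?thesis using ultrametric[OF x y] minus[OF y] less by (auto simp: max_def split: if_splits)
qed

lemma sum_le_bound:
  assumes "\<And>i. i \<in> S \<Longrightarrow> algebraic (g i)" "\<And>i. i \<in> S \<Longrightarrow> f (g i) \<le> c" "c \<ge> 0"
  shows "f (sum g S) \<le> c"
  using assms
proof (induction S rule: infinite_finite_induct)
  case (insert x F)
  then have "f (g x + sum g F) \<le> max (f (g x)) (f (sum g F))"
    by (intro ultrametric algebraic_sum) auto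
  also have "\<dots> \<le> c" using insert by simp
  finally show ?case using insert by simp
qed auto

lemma le_1_if_root_of_int_poly:
  assumes coeffs: "\<And>i. Polynomial.coeff q i \<in> \<int>" and root: "poly q \<alpha> = 0"
    and lead: "f (Polynomial.lead_coeff q) = 1" and \<alpha>: "algebraic \<alpha>"
  shows "f \<alpha> \<le> 1"
proof (rule ccontr)
  assume "\<not> f \<alpha> \<le> 1"
  then have big: "f \<alpha> > 1" by simp
  have coeff_alg: "algebraic (Polynomial.coeff q i)" for i
    using coeffs[of i] by (auto intro: rat_imp_algebraic elim: Ints_cases)
  have coeff_le: "f (Polynomial.coeff q i) \<le> 1" for i
    using coeffs[of i] of_int_le_1 by (auto elim: Ints_cases)
  obtain m where m: "Polynomial.degree q = Suc m"
  proof (cases "Polynomial.degree q")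
    case 0
    then show ?thesis using root lead by (simp add: poly_altdef)
  qed
  have "0 = (\<Sum>i\<le>m. Polynomial.coeff q i * \<alpha> ^ i) + Polynomial.lead_coeff q * \<alpha> ^ Suc m"
    using root m by (simp add: poly_altdef)
  then have eq: "Polynomial.lead_coeff q * \<alpha> ^ Suc m = - (\<Sum>i\<le>m. Polynomial.coeff q i * \<alpha> ^ i)"
    by (simp add: eq_neg_iff_add_eq_0 add.commute)
  have "f (Polynomial.lead_coeff q * \<alpha> ^ Suc m) = f \<alpha> ^ Suc m"
    using lead coeff_alg[of "Polynomial.degree q"] mult[OF _ algebraic_power[OF \<alpha>]] power[OF \<alpha>]
    by (simp del: power_Suc)
  moreover have "f (\<Sum>i\<le>m. Polynomial.coeff q i * \<alpha> ^ i) \<le> f \<alpha> ^ m"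
  proof (rule sum_le_bound)
    fix i assume "i \<in> {..m}"
    then have "f (Polynomial.coeff q i) * f \<alpha> ^ i \<le> 1 * f \<alpha> ^ m"
      using coeff_le[of i] big nonneg[OF coeff_alg[of i]] by (intro mult_mono power_increasing) auto
    then show "f (Polynomial.coeff q i * \<alpha> ^ i) \<le> f \<alpha> ^ m"
      using coeff_alg \<alpha> by (simp add: mult power algebraic_power)
  qed (use big coeff_alg \<alpha> in \<open>auto intro: algebraic_intros\<close>)
  moreover have "algebraic (\<Sum>i\<le>m. Polynomial.coeff q i * \<alpha> ^ i)"
    using coeff_alg \<alpha> by (intro algebraic_sum algebraic_intros)
  ultimately have "f \<alpha> ^ Suc m \<le> f \<alpha> ^ m" using eq minus by metis
  then show False using big by simp
qed

lemma max_eq_1_step: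
  assumes a: "algebraic a" and b: "algebraic b" and lam: "algebraic lam" "f lam = 1"
    and max_1: "max (f a) (f b) = 1" and "d > 0"
  shows "max (f (a ^ d + lam * b ^ d)) (f (a * b ^ (d - 1))) = 1"
proof -
  have fa: "0 \<le> f a" "f a \<le> 1" and fb: "0 \<le> f b" "f b \<le> 1" using nonneg a b max_1 by auto
  have alg: "algebraic (a ^ d)" "algebraic (lam * b ^ d)" using a b lam by (auto intro: algebraic_intros)
  have fad: "f (a ^ d) = f a ^ d" using power a by blast
  have fbd: "f (lam * b ^ d) = f b ^ d" using mult[OF lam(1) algebraic_power[OF b]] power[OF b] lam by simp
  have fab: "f (a * b ^ (d - 1)) = f a * f b ^ (d - 1)" using mult[OF a algebraic_power[OF b]] power[OF b] by simp
  have "max (f (a ^ d)) (f (lam * b ^ d)) \<le> 1"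
    using power_le_one[OF fa] power_le_one[OF fb] fad fbd by simp
  then have fst_le: "f (a ^ d + lam * b ^ d) \<le> 1" using ultrametric[OF alg] by linarith
  have snd_le: "f (a * b ^ (d - 1)) \<le> 1" using fab fa fb by (simp add: mult_le_one power_le_one)
  have pow_less: "x ^ d < 1" if "0 \<le> x" "x < 1" for x :: real
    using that \<open>d > 0\<close> by (simp add: power_less_one_iff)
  consider "f a = 1" "f b = 1" | "f a = 1" "f b < 1" | "f a < 1" "f b = 1"
    using max_1 fa fb by (metis less_eq_real_def max_def)
  then show ?thesis
  proof cases
    case 1
    then show ?thesis using fab fst_le by simp
  next
    case 2
    then have "f (a ^ d + lam * b ^ d) = 1" using add_eq_if_less[OF alg] fad fbd pow_less fb by simp
    then show ?thesis using snd_le by simp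
  next
    case 3
    then have "f (lam * b ^ d + a ^ d) = 1" using add_eq_if_less[OF alg(2) alg(1)] fad fbd pow_less fa by simp
    then show ?thesis using snd_le by (simp add: add.commute)
  qed
qed

end

section \<open>The places of \<rat>\<close>

lemma places_cases:
  assumes "v \<in> places"
  obtains "v = Arch" | p where "v = Fin p" "Factorial_Ring.prime p"
  using assms unfolding places_def by auto

lemma padic_abs_of_int:
  "n \<noteq> 0 \<Longrightarrow> padic_abs p (of_int n) = real p powr (- real (multiplicity (int p) n))"
  unfolding padic_abs_def by (simp add: quotient_of_int)

context
  fixes absv :: "place \<Rightarrow> complex \<Rightarrow> real"
  assumes absv: "extends_places absv"
begin

lemma algebraic_abs_value_place: "v \<in> places \<Longrightarrow> algebraic_abs_value (absv v)"
  using absv unfolding extends_places_def algebraic_abs_value_def by blast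

lemma abs_Fin_of_int:
  assumes "Factorial_Ring.prime p"
  shows "absv (Fin p) (of_int n) = padic_abs p (of_int n)"
proof -
  have "Fin p \<in> places" using assms by (simp add: places_def)
  then have "absv (Fin p) (of_rat (of_int n)) = place_abs_rat (Fin p) (of_int n)"
    using absv unfolding extends_places_def by blast
  then show ?thesis by (simp add: place_abs_rat_def)
qed

lemma abs_Fin_of_int_le_1:
  assumes "Factorial_Ring.prime p"
  shows "absv (Fin p) (of_int n) \<le> 1"
  unfolding abs_Fin_of_int[OF assms]
proof (cases "n = 0")
  case False
  have "real p \<ge> 1" using prime_gt_0_nat[OF assms] by linarith
  then show "padic_abs p (of_int n) \<le> 1"
    using False by (simp add: padic_abs_of_int powr_minus_divide ge_one_powr_ge_zero)
qed (simp add: padic_abs_def)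

lemma abs_Fin_of_int_eq_1:
  assumes "Factorial_Ring.prime p" and "\<not> int p dvd n"
  shows "absv (Fin p) (of_int n) = 1"
proof -
  have "n \<noteq> 0" using assms(2) by auto
  then show ?thesis
    using assms prime_gt_0_nat[OF assms(1)]
    by (simp add: abs_Fin_of_int padic_abs_of_int not_dvd_imp_multiplicity_0)
qed

lemma nonarch_abs_value_Fin: "Factorial_Ring.prime p \<Longrightarrow> nonarch_abs_value (absv (Fin p))"
  by (auto intro!: nonarch_abs_value.intro nonarch_abs_value_axioms.intro algebraic_abs_value_place
      abs_Fin_of_int_le_1 simp: places_def)

text \<open>An integer equation for \<alpha> gives |\<alpha>|_p \<le> 1 at every prime p not dividing its
  leading coefficient.\<close>

lemma finite_places_abs_gt_1:
  assumes \<alpha>: "algebraic \<alpha>"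
  shows "finite {v \<in> places. absv v \<alpha> > 1}"
proof -
  obtain q where q: "\<And>i. Polynomial.coeff q i \<in> \<int>" "q \<noteq> 0" "poly q \<alpha> = 0"
    using algebraicE[OF \<alpha>] by blast
  obtain c where c: "Polynomial.lead_coeff q = of_int c" using q(1) by (meson Ints_cases)
  have "c \<noteq> 0" using c q(2) by auto
  have "{v \<in> places. absv v \<alpha> > 1} \<subseteq> insert Arch (Fin ` {..nat \<bar>c\<bar>})"
  proof (rule subsetI, rule ccontr)
    fix v assume v: "v \<in> {v \<in> places. absv v \<alpha> > 1}" "v \<notin> insert Arch (Fin ` {..nat \<bar>c\<bar>})"
    then obtain p where p: "v = Fin p" "Factorial_Ring.prime p"
      by (auto elim: places_cases)
    with v have "int p > \<bar>c\<bar>" by auto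
    then have "\<not> int p dvd c" by (auto dest: dvd_imp_le_int[OF \<open>c \<noteq> 0\<close>])
    then have "absv (Fin p) (Polynomial.lead_coeff q) = 1" using abs_Fin_of_int_eq_1 p(2) c by simp
    then have "absv (Fin p) \<alpha> \<le> 1"
      by (rule nonarch_abs_value.le_1_if_root_of_int_poly[OF nonarch_abs_value_Fin[OF p(2)] q(1,3) _ \<alpha>])
    with v p(1) show False by simp
  qed
  then show ?thesis by (rule finite_subset) simp
qed

lemma finite_places_abs_ne_1:
  assumes \<alpha>: "algebraic \<alpha>" and "\<alpha> \<noteq> 0"
  shows "finite {v \<in> places. absv v \<alpha> \<noteq> 1}"
proof -
  have "{v \<in> places. absv v \<alpha> \<noteq> 1} \<subseteq>
      {v \<in> places. absv v \<alpha> > 1} \<union> {v \<in> places. absv v (inverse \<alpha>) > 1}"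
  proof safe
    fix v assume v: "v \<in> places" "absv v \<alpha> \<noteq> 1" "\<not> absv v (inverse \<alpha>) > 1"
    interpret algebraic_abs_value "absv v" using algebraic_abs_value_place v(1) .
    have "absv v (inverse \<alpha>) * absv v \<alpha> \<le> absv v \<alpha>"
      using v(3) nonneg[OF \<alpha>] nonneg[of "inverse \<alpha>"] \<alpha> by (intro mult_left_le_one_le) auto
    then show "absv v \<alpha> > 1" using inverse_mult[OF assms] v(2) by linarith
  qed
  then show ?thesis
    using finite_places_abs_gt_1[OF \<alpha>] finite_places_abs_gt_1[OF algebraic_inverse[OF \<alpha>]]
    by (meson finite_Un finite_subset)
qed

end

section \<open>The orbit evaluated at \<lambda>\<close>

lemma poly_not_both_zero_if_coprime:
  fixes A B :: "'a :: field poly"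
  assumes "coprime A B"
  shows "poly A x \<noteq> 0 \<or> poly B x \<noteq> 0"
proof (rule ccontr)
  assume "\<not> ?thesis"
  then have "[:- x, 1:] dvd A" "[:- x, 1:] dvd B" by (simp_all add: dvd_iff_poly_eq_0)
  then have "is_unit [:- x, 1:]" using assms coprime_common_divisor by blast
  then show False by (simp add: is_unit_iff_degree)
qed

lemma poly_div_X:
  fixes P :: "'a :: field poly"
  assumes "[:0, 1:] dvd P" and "x \<noteq> 0"
  shows "poly (P div [:0, 1:]) x = inverse x * poly P x"
proof -
  obtain Q where "P = [:0, 1:] * Q" using assms(1) by blast
  moreover have "[:0, 1:] * Q div [:0, 1:] = Q" by (rule nonzero_mult_div_cancel_left) simp
  ultimately show ?thesis using assms(2) by simp
qed

lemma poly_AB_seq_Suc: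
  fixes lam :: complex
  assumes "lam \<noteq> 0" and "d > 0"
  shows "\<exists>u \<in> {1, inverse lam}.
    poly (A_seq d A B (Suc n)) lam
      = u * (poly (A_seq d A B n) lam ^ d + lam * poly (B_seq d A B n) lam ^ d) \<and>
    poly (B_seq d A B (Suc n)) lam
      = u * (poly (A_seq d A B n) lam * poly (B_seq d A B n) lam ^ (d - 1))"
proof (cases "n = 0 \<and> poly A 0 = 0")
  case True
  then have X_dvd_A: "[:0, 1:] dvd A" using dvd_iff_poly_eq_0[of 0 A] by simp
  have "A dvd A ^ d" using \<open>d > 0\<close> by simp
  then have "[:0, 1:] dvd A ^ d + [:0, 1:] * B ^ d"
    by (rule dvd_add[OF dvd_trans[OF X_dvd_A] dvd_triv_left])
  moreover have "[:0, 1:] dvd A * B ^ (d - 1)" using X_dvd_A by simp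
  ultimately show ?thesis
    using True by (simp add: A_seq_def B_seq_def poly_div_X[OF _ \<open>lam \<noteq> 0\<close>])
next
  case False
  then show ?thesis by (cases n) (auto simp: A_seq_def B_seq_def step_AB_def)
qed

context nonarch_abs_value
begin

lemma max_AB_seq_eq_1:
  assumes lam: "algebraic lam" "lam \<noteq> 0" "f lam = 1" and "d > 0"
    and AB: "algebraic (poly A lam)" "algebraic (poly B lam)"
      "max (f (poly A lam)) (f (poly B lam)) = 1"
  shows "max (f (poly (A_seq d A B n) lam)) (f (poly (B_seq d A B n) lam)) = 1"
proof -
  have "algebraic (poly (A_seq d A B n) lam) \<and> algebraic (poly (B_seq d A B n) lam) \<and>
      max (f (poly (A_seq d A B n) lam)) (f (poly (B_seq d A B n) lam)) = 1"
  proof (induction n)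
    case 0
    then show ?case using AB by (simp add: A_seq_def B_seq_def)
  next
    case (Suc n)
    let ?a = "poly (A_seq d A B n) lam" and ?b = "poly (B_seq d A B n) lam"
    obtain u where u: "u \<in> {1, inverse lam}"
      and eq: "poly (A_seq d A B (Suc n)) lam = u * (?a ^ d + lam * ?b ^ d)"
        "poly (B_seq d A B (Suc n)) lam = u * (?a * ?b ^ (d - 1))"
      using poly_AB_seq_Suc[OF lam(2) \<open>d > 0\<close>] by blast
    have "algebraic u" "f u = 1" using u lam inverse_mult[OF lam(1,2)] by auto
    moreover have "algebraic (?a ^ d + lam * ?b ^ d)" "algebraic (?a * ?b ^ (d - 1))"
      using Suc lam by (auto intro!: algebraic_intros)
    ultimately show ?case
      using max_eq_1_step[of ?a ?b lam d] Suc lam \<open>d > 0\<close> by (simp add: eq mult algebraic_mult)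
  qed
  then show ?thesis by blast
qed

end

theorem proposition4p1:
  fixes d :: nat and A B :: "complex poly" and lam :: complex
    and absv :: "place \<Rightarrow> complex \<Rightarrow> real"
  assumes "d \<ge> 2"
    and "Qbar_poly A" and "Qbar_poly B"
    and "A \<noteq> 0" and "B \<noteq> 0" and "coprime A B"
    and "algebraic lam" and "lam \<noteq> 0"
    and "extends_places absv"
  shows "finite {v \<in> places. \<not> (\<forall>n::nat.
           ln (max (absv v (poly (A_seq d A B n) lam)) (absv v (poly (B_seq d A B n) lam))) = 0)}"
proof -
  let ?a = "poly A lam" and ?b = "poly B lam"
  have alg: "algebraic ?a" "algebraic ?b" using assms(2,3,7) by (simp_all add: algebraic_poly)
  define bad where "bad = insert Arch (\<Union>x \<in> {lam, ?a, ?b} - {0}. {v \<in> places. absv v x \<noteq> 1})"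
  have fin: "finite bad"
    unfolding bad_def using finite_places_abs_ne_1[OF assms(9)] alg assms(7) by auto
  have good: "ln (max (absv v (poly (A_seq d A B n) lam)) (absv v (poly (B_seq d A B n) lam))) = 0"
    if v: "v \<in> places" "v \<notin> bad" for v n
  proof -
    obtain p where p: "v = Fin p" "Factorial_Ring.prime p" using v by (auto simp: bad_def elim: places_cases)
    interpret nonarch_abs_value "absv v" using nonarch_abs_value_Fin[OF assms(9) p(2)] p(1) by simp
    have units: "absv v x = 1" if "x \<in> {lam, ?a, ?b}" "x \<noteq> 0" for x
      using v that by (auto simp: bad_def)
    have "max (absv v ?a) (absv v ?b) = 1"
      using poly_not_both_zero_if_coprime[OF assms(6), of lam] units by (cases "?a = 0"; cases "?b = 0") auto
    then show ?thesis using max_AB_seq_eq_1 assms(1,7,8) units alg by simp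
  qed
  show ?thesis using fin by (rule finite_subset[rotated]) (use good in blast)
qed

end
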